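(* For each $n$, let $W\in\mathbb{R}^{n\times n}$ be a random symmetric matrix with zero diagonal whose entries $W_{ij}$, $i<j$, are independent Rademacher random variables (uniform on $\{-1,+1\}$). For $S\subseteq[n]=\{1,\dots,n\}$ let $W_S$ denote the principal submatrix of $W$ with index set $S$. Then for every $\beta>0$ (independent of $n$) there exists $\alpha>0$ (independent of $n$) such that $$\max_{\substack{S\subseteq[n]\\|S|\leq \alpha n}}\|W_S\|_{2\to2}\leq \beta\sqrt{n}$$ with probability at least $1-4e^{-\alpha\log(1/\alpha)n}$.
   Context: $\|M\|_{2\to2}$ denotes the operator norm (largest singular value) of a matrix $M$ with respect to the Euclidean norm. *)

theory Defs
  imports "HOL-Probability.Probability"
begin

text \<open>Index set [n] is rendered as {..<n} = {0,...,n-1}. A matrix is a function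
  nat => nat => real; only entries with indices < n matter.\<close>

text \<open>Independent Rademacher signs for the strictly upper triangular entries i<j<n
  (all other entries fixed to 0, so the set is finite).\<close>
definition sign_configs :: "nat \<Rightarrow> (nat \<Rightarrow> nat \<Rightarrow> real) set" where
  "sign_configs n = {f. (\<forall>i j. i < j \<and> j < n \<longrightarrow> f i j \<in> {-1, 1}) \<and>
                        (\<forall>i j. \<not> (i < j \<and> j < n) \<longrightarrow> f i j = 0)}"

definition sym_of :: "(nat \<Rightarrow> nat \<Rightarrow> real) \<Rightarrow> nat \<Rightarrow> nat \<Rightarrow> real" where
  "sym_of f i j = (if i < j then f i j else if j < i then f j i else 0)"

definition rademacher_sym_pmf :: "nat \<Rightarrow> (nat \<Rightarrow> nat \<Rightarrow> real) pmf" where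
  "rademacher_sym_pmf n = map_pmf sym_of (pmf_of_set (sign_configs n))"

definition op_norm_sub :: "(nat \<Rightarrow> nat \<Rightarrow> real) \<Rightarrow> nat set \<Rightarrow> real" where
  "op_norm_sub W S = Sup {sqrt (\<Sum>i\<in>S. (\<Sum>j\<in>S. W i j * x j)^2) | x. (\<Sum>j\<in>S. (x j)^2) \<le> 1}"

end

theory Submission
  imports Defs
begin

text \<open>
  A union bound over a net. Put K = \<alpha> n. Rounding toward zero at scale 4 sqrt K moves every unit
  vector supported on at most K coordinates by at most 1/4 and lands on an integer point of l1-norm
  at most 4K; weighting these lattice points by exp(-l |z|) shows there are at most
  exp(4 \<alpha> n (ln(1/\<alpha>) + 1)) of them, and the same net serves every support S.
  The usual duality argument bounds the norm of W_S by twice the largest value of the bilinear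
  form u^T W v over the net. For fixed unit vectors u, v this form is a Rademacher sum whose squared
  coefficients add up to at most 2, so by Hoeffding it exceeds \<beta> sqrt n / 2 with probability at most
  exp(-\<beta>^2 n / 16). Once \<alpha> is small in terms of \<beta>, this beats the squared size of the net
  by the factor exp(-\<alpha> ln(1/\<alpha>) n).
\<close>

section \<open>Rademacher sums\<close>

lemma cosh_le_exp_half_square:
  fixes x :: real
  shows "cosh x \<le> exp (x\<^sup>2 / 2)"
proof -
  define a where "a = \<bar>x\<bar>"
  have "- (2 * a) * (1/2) + ln (1 + 1/2 * (exp (2 * a) - 1)) \<le> (2 * a)\<^sup>2 / 8"
    by (rule Hoeffdings_lemma_aux) (simp_all add: a_def)
  moreover have "1 + 1/2 * (exp (2 * a) - 1) = exp a * cosh a"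
    by (simp add: cosh_field_def field_simps flip: exp_add)
  ultimately have "ln (cosh a) \<le> a\<^sup>2 / 2"
    by (simp add: ln_mult power2_eq_square)
  then have "cosh a \<le> exp (a\<^sup>2 / 2)"
    by (metis cosh_real_pos exp_le_cancel_iff exp_ln)
  then show ?thesis
    by (simp add: a_def)
qed

lemma sum_exp_rademacher_le:
  fixes c :: "'a \<Rightarrow> real"
  assumes "finite I"
  shows "(\<Sum>h\<in>PiE I (\<lambda>_. {-1, 1}). exp (\<Sum>p\<in>I. h p * c p))
           \<le> 2 ^ card I * exp ((\<Sum>p\<in>I. (c p)\<^sup>2) / 2)"
proof -
  have "(\<Sum>h\<in>PiE I (\<lambda>_. {-1, 1}). exp (\<Sum>p\<in>I. h p * c p))
      = (\<Sum>h\<in>PiE I (\<lambda>_. {-1, 1}). \<Prod>p\<in>I. exp (h p * c p))"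
    using assms by (simp add: exp_sum)
  also have "\<dots> = (\<Prod>p\<in>I. \<Sum>y\<in>{-1, 1}. exp (y * c p))"
    using assms by (rule prod_sum_PiE[symmetric]) simp
  also have "\<dots> = (\<Prod>p\<in>I. 2 * cosh (c p))"
    by (intro prod.cong refl) (simp add: cosh_field_def)
  also have "\<dots> \<le> (\<Prod>p\<in>I. 2 * exp ((c p)\<^sup>2 / 2))"
    by (intro prod_mono) (simp add: cosh_le_exp_half_square less_imp_le)
  also have "\<dots> = 2 ^ card I * exp ((\<Sum>p\<in>I. (c p)\<^sup>2) / 2)"
    using assms by (simp add: prod.distrib exp_sum sum_divide_distrib)
  finally show ?thesis .
qed

lemma card_rademacher_tail_le:
  fixes c :: "'a \<Rightarrow> real"
  assumes "finite I" and "0 \<le> t" and "0 < \<sigma>2" and "(\<Sum>p\<in>I. (c p)\<^sup>2) \<le> \<sigma>2"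
  shows "card {h \<in> PiE I (\<lambda>_. {-1, 1}). t \<le> (\<Sum>p\<in>I. h p * c p)}
           \<le> 2 ^ card I * exp (- t\<^sup>2 / (2 * \<sigma>2))"
proof -
  let ?B = "PiE I (\<lambda>_. {-1::real, 1})"
  define l where "l = t / \<sigma>2"
  define X where "X h = (\<Sum>p\<in>I. h p * c p)" for h :: "'a \<Rightarrow> real"
  have l: "0 \<le> l"
    using assms by (simp add: l_def)
  have "real (card {h \<in> ?B. t \<le> X h}) = (\<Sum>h\<in>{h \<in> ?B. t \<le> X h}. 1)"
    by simp
  also have "\<dots> \<le> (\<Sum>h\<in>{h \<in> ?B. t \<le> X h}. exp (l * (X h - t)))"
    using l by (intro sum_mono) simp
  also have "\<dots> \<le> (\<Sum>h\<in>?B. exp (l * (X h - t)))"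
    using assms(1) by (intro sum_mono2) (auto intro: finite_PiE)
  also have "\<dots> = exp (- l * t) * (\<Sum>h\<in>?B. exp (\<Sum>p\<in>I. h p * (l * c p)))"
    by (simp add: X_def sum_distrib_left right_diff_distrib mult_exp_exp mult.left_commute)
  also have "\<dots> \<le> exp (- l * t) * (2 ^ card I * exp ((\<Sum>p\<in>I. (l * c p)\<^sup>2) / 2))"
    by (intro mult_left_mono sum_exp_rademacher_le assms(1)) simp
  also have "\<dots> \<le> exp (- l * t) * (2 ^ card I * exp (l\<^sup>2 * \<sigma>2 / 2))"
    using assms(4) by (simp add: power_mult_distrib mult_left_mono flip: sum_distrib_left)
  also have "\<dots> = 2 ^ card I * exp (- t\<^sup>2 / (2 * \<sigma>2))"
    using assms(3) by (simp add: l_def mult_exp_exp power2_eq_square field_simps)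
  finally show ?thesis
    by (simp add: X_def)
qed

section \<open>Bilinear forms of the random sign matrix\<close>

definition upper_pairs :: "nat \<Rightarrow> (nat \<times> nat) set" where
  "upper_pairs n = {(i, j). i < j \<and> j < n}"

definition extend_upper :: "nat \<Rightarrow> (nat \<times> nat \<Rightarrow> real) \<Rightarrow> nat \<Rightarrow> nat \<Rightarrow> real" where
  "extend_upper n h i j = (if (i, j) \<in> upper_pairs n then h (i, j) else 0)"

lemma finite_upper_pairs [simp]: "finite (upper_pairs n)"
  by (rule finite_subset[of _ "{..<n} \<times> {..<n}"]) (auto simp: upper_pairs_def)

lemma sign_configs_eq_image:
  "sign_configs n = extend_upper n ` PiE (upper_pairs n) (\<lambda>_. {-1, 1})"
proof (intro set_eqI iffI)
  fix f assume f: "f \<in> sign_configs n"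
  have "restrict (case_prod f) (upper_pairs n) \<in> PiE (upper_pairs n) (\<lambda>_. {-1, 1})"
    using f by (auto simp: sign_configs_def upper_pairs_def)
  moreover have "f = extend_upper n (restrict (case_prod f) (upper_pairs n))"
    using f by (auto simp: sign_configs_def upper_pairs_def extend_upper_def fun_eq_iff)
  ultimately show "f \<in> extend_upper n ` PiE (upper_pairs n) (\<lambda>_. {-1, 1})"
    by blast
qed (auto simp: sign_configs_def upper_pairs_def extend_upper_def)

lemma inj_on_extend_upper: "inj_on (extend_upper n) (PiE (upper_pairs n) (\<lambda>_. {-1, 1}))"
proof (rule inj_onI)
  fix h h' assume h: "h \<in> PiE (upper_pairs n) (\<lambda>_. {-1, 1})"
    and h': "h' \<in> PiE (upper_pairs n) (\<lambda>_. {-1, 1})"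
    and eq: "extend_upper n h = extend_upper n h'"
  show "h = h'"
  proof (rule PiE_ext[OF h h'])
    fix p assume "p \<in> upper_pairs n"
    then show "h p = h' p"
      using fun_cong[OF fun_cong[OF eq, of "fst p"], of "snd p"] by (simp add: extend_upper_def)
  qed
qed

lemma card_sign_configs: "card (sign_configs n) = 2 ^ card (upper_pairs n)"
  by (simp add: sign_configs_eq_image card_image[OF inj_on_extend_upper] card_PiE numeral_2_eq_2)

lemma finite_sign_configs: "finite (sign_configs n)"
  by (simp add: sign_configs_eq_image finite_PiE)

lemma sign_configs_nonempty: "sign_configs n \<noteq> {}"
  using card_sign_configs[of n] by auto

lemma sum_upper_pairs: "(\<Sum>p\<in>upper_pairs n. g p) = (\<Sum>j<n. \<Sum>i<j. g (i, j))"
proof -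
  have "upper_pairs n = prod.swap ` (SIGMA j:{..<n}. {..<j})"
    by (auto simp: upper_pairs_def image_iff)
  then have "(\<Sum>p\<in>upper_pairs n. g p) = (\<Sum>(j, i)\<in>(SIGMA j:{..<n}. {..<j}). g (i, j))"
    by (simp add: sum.reindex) (simp add: case_prod_unfold prod.swap_def)
  also have "\<dots> = (\<Sum>j<n. \<Sum>i<j. g (i, j))"
    by (rule sum.Sigma[symmetric]) auto
  finally show ?thesis .
qed

lemma sum_square_eq_upper_pairs:
  fixes g :: "nat \<Rightarrow> nat \<Rightarrow> 'a :: comm_monoid_add"
  shows "(\<Sum>i<n. \<Sum>j<n. g i j) = (\<Sum>(i, j)\<in>upper_pairs n. g i j + g j i) + (\<Sum>i<n. g i i)"
proof (induction n)
  case (Suc n)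
  have "(\<Sum>i<Suc n. \<Sum>j<Suc n. g i j)
      = (\<Sum>i<n. \<Sum>j<n. g i j) + ((\<Sum>i<n. g i n + g n i) + g n n)"
    by (simp add: sum.distrib ac_simps)
  with Suc.IH show ?case
    by (simp add: sum_upper_pairs ac_simps)
qed (simp add: upper_pairs_def)

lemma sym_form_eq_sum_upper_pairs:
  "(\<Sum>i<n. \<Sum>j<n. u i * sym_of f i j * v j)
     = (\<Sum>(i, j)\<in>upper_pairs n. f i j * (u i * v j + u j * v i))"
  by (simp add: sum_square_eq_upper_pairs[where g = "\<lambda>i j. u i * sym_of f i j * v j"])
     (auto intro!: sum.cong simp: upper_pairs_def sym_of_def algebra_simps)

lemma sum_upper_pairs_sym_coeff_le:
  "(\<Sum>(i, j)\<in>upper_pairs n. (u i * v j + u j * v i)\<^sup>2)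
     \<le> 2 * (L2_set u {..<n})\<^sup>2 * (L2_set v {..<n})\<^sup>2"
proof -
  have "(\<Sum>(i, j)\<in>upper_pairs n. (u i * v j + u j * v i)\<^sup>2)
      \<le> 2 * (\<Sum>(i, j)\<in>upper_pairs n. (u i)\<^sup>2 * (v j)\<^sup>2 + (u j)\<^sup>2 * (v i)\<^sup>2)"
  proof -
    have "(a + b)\<^sup>2 \<le> 2 * (a\<^sup>2 + b\<^sup>2)" for a b :: real
      using zero_le_power2[of "a - b"] by (simp add: power2_eq_square algebra_simps)
    then show ?thesis
      unfolding sum_distrib_left by (intro sum_mono) (auto simp flip: power_mult_distrib)
  qed
  also have "\<dots> \<le> 2 * (\<Sum>i<n. \<Sum>j<n. (u i)\<^sup>2 * (v j)\<^sup>2)"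
    using sum_square_eq_upper_pairs[of "\<lambda>i j. (u i)\<^sup>2 * (v j)\<^sup>2" n]
    by (simp add: split_def sum_nonneg)
  also have "\<dots> = 2 * (L2_set u {..<n})\<^sup>2 * (L2_set v {..<n})\<^sup>2"
    by (simp add: L2_set_def sum_nonneg sum_product)
  finally show ?thesis .
qed

lemma card_sym_form_tail_le:
  assumes "L2_set u {..<n} \<le> 1" and "L2_set v {..<n} \<le> 1" and "0 \<le> t"
  shows "card {f \<in> sign_configs n. t \<le> (\<Sum>i<n. \<Sum>j<n. u i * sym_of f i j * v j)}
           \<le> card (sign_configs n) * exp (- t\<^sup>2 / 4)"
proof -
  define c where "c = (\<lambda>(i, j). u i * v j + u j * v i)"
  let ?B = "PiE (upper_pairs n) (\<lambda>_. {-1::real, 1})"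
  have "{f \<in> sign_configs n. t \<le> (\<Sum>i<n. \<Sum>j<n. u i * sym_of f i j * v j)}
      = extend_upper n ` {h \<in> ?B. t \<le> (\<Sum>p\<in>upper_pairs n. h p * c p)}"
    unfolding sign_configs_eq_image sym_form_eq_sum_upper_pairs
    by (auto simp: c_def extend_upper_def split_def intro!: sum.cong)
  then have "card {f \<in> sign_configs n. t \<le> (\<Sum>i<n. \<Sum>j<n. u i * sym_of f i j * v j)}
      = card {h \<in> ?B. t \<le> (\<Sum>p\<in>upper_pairs n. h p * c p)}"
    by (metis (no_types, lifting) card_image inj_on_extend_upper inj_on_subset mem_Collect_eq subsetI)
  also have "\<dots> \<le> 2 ^ card (upper_pairs n) * exp (- t\<^sup>2 / (2 * 2))"
  proof (rule card_rademacher_tail_le)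
    have "(\<Sum>p\<in>upper_pairs n. (c p)\<^sup>2) \<le> 2 * (L2_set u {..<n})\<^sup>2 * (L2_set v {..<n})\<^sup>2"
      unfolding c_def split_def using sum_upper_pairs_sym_coeff_le by (simp add: split_def)
    also have "\<dots> \<le> 2 * 1 * 1"
      using assms by (intro mult_mono power_le_one) auto
    finally show "(\<Sum>p\<in>upper_pairs n. (c p)\<^sup>2) \<le> 2" by simp
  qed (use assms in auto)
  finally show ?thesis
    by (simp add: card_sign_configs)
qed

section \<open>Operator norms of principal submatrices via nets\<close>

lemma L2_set_abs: "L2_set (\<lambda>i. \<bar>f i\<bar>) A = L2_set f A"
  by (simp add: L2_set_def)

lemma abs_sum_mult_le_L2_set: "\<bar>\<Sum>i\<in>A. f i * g i\<bar> \<le> L2_set f A * L2_set g A"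
  using sum_abs[of "\<lambda>i. f i * g i" A] L2_set_mult_ineq[of f g A] by (simp add: abs_mult)

definition mat_vec :: "(nat \<Rightarrow> nat \<Rightarrow> real) \<Rightarrow> nat set \<Rightarrow> (nat \<Rightarrow> real) \<Rightarrow> nat \<Rightarrow> real" where
  "mat_vec W S x i = (\<Sum>j\<in>S. W i j * x j)"

lemma mat_vec_diff: "mat_vec W S (\<lambda>j. x j - y j) i = mat_vec W S x i - mat_vec W S y i"
  by (simp add: mat_vec_def right_diff_distrib sum_subtractf)

lemma op_norm_sub_eq_Sup:
  "op_norm_sub W S = Sup {L2_set (mat_vec W S x) S | x. L2_set x S \<le> 1}"
  by (simp add: op_norm_sub_def L2_set_def mat_vec_def)

lemma L2_set_mat_vec_le_frobenius:
  "L2_set (mat_vec W S x) S \<le> L2_set (\<lambda>i. L2_set (W i) S) S * L2_set x S"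
proof -
  have "L2_set (mat_vec W S x) S = L2_set (\<lambda>i. \<bar>mat_vec W S x i\<bar>) S"
    by (simp add: L2_set_abs)
  also have "\<dots> \<le> L2_set (\<lambda>i. L2_set (W i) S * L2_set x S) S"
    by (intro L2_set_mono) (auto simp: mat_vec_def abs_sum_mult_le_L2_set)
  also have "\<dots> = L2_set (\<lambda>i. L2_set (W i) S) S * L2_set x S"
    by (simp add: L2_set_left_distrib)
  finally show ?thesis .
qed

lemma bdd_above_mat_vec_L2_set: "bdd_above {L2_set (mat_vec W S x) S | x. L2_set x S \<le> 1}"
proof (rule bdd_aboveI)
  fix r assume "r \<in> {L2_set (mat_vec W S x) S | x. L2_set x S \<le> 1}"
  then obtain x where "r = L2_set (mat_vec W S x) S" and "L2_set x S \<le> 1"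
    by blast
  then show "r \<le> L2_set (\<lambda>i. L2_set (W i) S) S"
    using L2_set_mat_vec_le_frobenius[of W S x]
    by (meson L2_set_nonneg mult_left_le order_trans)
qed

lemma op_norm_sub_nonneg: "0 \<le> op_norm_sub W S"
proof -
  have "L2_set (mat_vec W S (\<lambda>_. 0)) S \<le> op_norm_sub W S"
    unfolding op_norm_sub_eq_Sup
    by (rule cSup_upper[OF _ bdd_above_mat_vec_L2_set]) (auto simp: L2_set_def)
  then show ?thesis
    by (simp add: mat_vec_def L2_set_def)
qed

lemma L2_set_mat_vec_le_op_norm_sub:
  "L2_set (mat_vec W S x) S \<le> op_norm_sub W S * L2_set x S"
proof (cases "L2_set x S = 0")
  case True
  then show ?thesis
    using L2_set_mat_vec_le_frobenius[of W S x] by simp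
next
  case False
  define c where "c = L2_set x S"
  have c: "0 < c"
    using False by (simp add: c_def order_less_le)
  have scaled: "mat_vec W S (\<lambda>j. x j / c) = (\<lambda>i. mat_vec W S x i / c)"
    by (simp add: mat_vec_def fun_eq_iff sum_divide_distrib)
  have "L2_set (\<lambda>j. x j / c) S = 1"
    using c L2_set_right_distrib[of "1 / c" x S] by (simp add: c_def)
  then have "L2_set (\<lambda>i. mat_vec W S x i / c) S \<le> op_norm_sub W S"
    unfolding op_norm_sub_eq_Sup scaled[symmetric]
    by (intro cSup_upper bdd_above_mat_vec_L2_set) auto
  then show ?thesis
    using c L2_set_right_distrib[of "1 / c" "mat_vec W S x" S, symmetric]
    by (simp add: c_def divide_le_eq mult.commute)
qed

lemma abs_bilinear_le_op_norm_sub: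
  "\<bar>\<Sum>i\<in>S. x i * mat_vec W S y i\<bar> \<le> L2_set x S * op_norm_sub W S * L2_set y S"
  using abs_sum_mult_le_L2_set[of x "mat_vec W S y" S] L2_set_mat_vec_le_op_norm_sub[of W S y]
  by (simp add: mult.assoc mult_left_mono order_trans)

lemma exists_unit_vector_inner_eq_L2_set:
  "\<exists>x. L2_set x S \<le> 1 \<and> (\<Sum>i\<in>S. x i * a i) = L2_set a S"
proof -
  define r where "r = L2_set a S"
  \<comment> \<open>for r = 0 the junk value of division makes the witness 0, which still works\<close>
  have "L2_set (\<lambda>i. a i / r) S \<le> 1"
    using L2_set_right_distrib[of "1 / r" a S, symmetric] by (simp add: r_def)
  moreover have "(\<Sum>i\<in>S. (a i)\<^sup>2) = r\<^sup>2"
    by (simp add: r_def L2_set_def sum_nonneg)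
  then have "(\<Sum>i\<in>S. a i / r * a i) = r"
    by (cases "r = 0") (simp_all add: power2_eq_square flip: sum_divide_distrib)
  ultimately show ?thesis
    unfolding r_def by blast
qed

lemma L2_set_mat_vec_le_of_net:
  assumes approx: "\<And>x. L2_set x S \<le> 1 \<Longrightarrow> \<exists>u\<in>N. L2_set u S \<le> 1 \<and> L2_set (\<lambda>i. x i - u i) S \<le> \<epsilon>"
    and bounded: "\<And>u v. u \<in> N \<Longrightarrow> v \<in> N \<Longrightarrow> (\<Sum>i\<in>S. u i * mat_vec W S v i) \<le> t"
    and y: "L2_set y S \<le> 1"
  shows "L2_set (mat_vec W S y) S \<le> t + 2 * \<epsilon> * op_norm_sub W S"
proof -
  define M where "M = op_norm_sub W S"
  have M: "0 \<le> M"
    by (simp add: M_def op_norm_sub_nonneg)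
  obtain x where x: "L2_set x S \<le> 1"
    and x_dual: "(\<Sum>i\<in>S. x i * mat_vec W S y i) = L2_set (mat_vec W S y) S"
    using exists_unit_vector_inner_eq_L2_set by blast
  obtain u where u: "u \<in> N" "L2_set u S \<le> 1" "L2_set (\<lambda>i. x i - u i) S \<le> \<epsilon>"
    using approx[OF x] by blast
  obtain v where v: "v \<in> N" "L2_set (\<lambda>i. y i - v i) S \<le> \<epsilon>"
    using approx[OF y] by blast
  have \<epsilon>: "0 \<le> \<epsilon>"
    using u(3) L2_set_nonneg order_trans by blast
  have "L2_set (mat_vec W S y) S = (\<Sum>i\<in>S. u i * mat_vec W S v i)
      + (\<Sum>i\<in>S. (x i - u i) * mat_vec W S y i) + (\<Sum>i\<in>S. u i * mat_vec W S (\<lambda>j. y j - v j) i)"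
    by (simp add: x_dual[symmetric] mat_vec_diff algebra_simps sum.distrib sum_subtractf)
  moreover have "(\<Sum>i\<in>S. u i * mat_vec W S v i) \<le> t"
    using bounded u(1) v(1) by blast
  moreover have "\<bar>\<Sum>i\<in>S. (x i - u i) * mat_vec W S y i\<bar> \<le> \<epsilon> * M"
  proof -
    have "L2_set (\<lambda>i. x i - u i) S * M * L2_set y S \<le> \<epsilon> * M * 1"
      using u(3) y M \<epsilon> by (intro mult_mono) auto
    then show ?thesis
      using abs_bilinear_le_op_norm_sub[where x = "\<lambda>i. x i - u i" and y = y and W = W and S = S]
      by (simp add: M_def)
  qed
  moreover have "\<bar>\<Sum>i\<in>S. u i * mat_vec W S (\<lambda>j. y j - v j) i\<bar> \<le> \<epsilon> * M"
  proof -
    have "L2_set u S * M * L2_set (\<lambda>i. y i - v i) S \<le> 1 * M * \<epsilon>"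
      using u(2) v(2) M by (intro mult_mono) auto
    then show ?thesis
      using abs_bilinear_le_op_norm_sub[where x = u and y = "\<lambda>i. y i - v i" and W = W and S = S]
      by (simp add: M_def mult.commute)
  qed
  ultimately show ?thesis
    by (simp add: M_def)
qed

lemma op_norm_sub_le_of_net:
  assumes "\<And>x. L2_set x S \<le> 1 \<Longrightarrow> \<exists>u\<in>N. L2_set u S \<le> 1 \<and> L2_set (\<lambda>i. x i - u i) S \<le> \<epsilon>"
    and "\<And>u v. u \<in> N \<Longrightarrow> v \<in> N \<Longrightarrow> (\<Sum>i\<in>S. u i * mat_vec W S v i) \<le> t"
  shows "(1 - 2 * \<epsilon>) * op_norm_sub W S \<le> t"
proof -
  define M where "M = op_norm_sub W S"
  have "Sup {L2_set (mat_vec W S x) S | x. L2_set x S \<le> 1} \<le> t + 2 * \<epsilon> * M"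
    using L2_set_mat_vec_le_of_net[OF assms, folded M_def]
    by (intro cSup_least) (auto simp: L2_set_0' intro!: exI[of _ "\<lambda>_. 0"])
  then show ?thesis
    by (simp add: M_def op_norm_sub_eq_Sup[symmetric] algebra_simps)
qed

section \<open>A lattice net for sparse unit vectors\<close>

text \<open>Rounding toward zero never increases absolute values, so rounded vectors stay in the unit ball.\<close>

definition round_to_zero :: "real \<Rightarrow> int" where
  "round_to_zero r = (if 0 \<le> r then \<lfloor>r\<rfloor> else \<lceil>r\<rceil>)"

lemma abs_round_to_zero_le: "\<bar>real_of_int (round_to_zero r)\<bar> \<le> \<bar>r\<bar>"
  by (simp add: round_to_zero_def)

lemma abs_sub_round_to_zero_le: "\<bar>r - real_of_int (round_to_zero r)\<bar> \<le> 1"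
  using floor_correct[of r] ceiling_correct[of r] by (simp add: round_to_zero_def) linarith

definition lattice_round :: "real \<Rightarrow> nat set \<Rightarrow> (nat \<Rightarrow> real) \<Rightarrow> nat \<Rightarrow> int" where
  "lattice_round s S x i = (if i \<in> S then round_to_zero (s * x i) else 0)"

lemma L2_set_lattice_round_le:
  assumes "0 < s"
  shows "L2_set (\<lambda>i. real_of_int (lattice_round s S x i) / s) S \<le> L2_set x S"
proof -
  have "\<bar>real_of_int (lattice_round s S x i) / s\<bar> \<le> \<bar>x i\<bar>" if "i \<in> S" for i
    using that assms abs_round_to_zero_le[of "s * x i"]
    by (simp add: lattice_round_def divide_le_eq abs_mult mult.commute)
  then have "L2_set (\<lambda>i. \<bar>real_of_int (lattice_round s S x i) / s\<bar>) S \<le> L2_set (\<lambda>i. \<bar>x i\<bar>) S"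
    by (intro L2_set_mono) auto
  then show ?thesis
    by (simp only: L2_set_abs)
qed

lemma L2_set_sub_lattice_round_le:
  assumes "0 < s"
  shows "L2_set (\<lambda>i. x i - real_of_int (lattice_round s S x i) / s) S \<le> sqrt (card S) / s"
proof -
  have "\<bar>x i - real_of_int (lattice_round s S x i) / s\<bar> \<le> 1 / s" if "i \<in> S" for i
  proof -
    have "x i - real_of_int (lattice_round s S x i) / s
        = (s * x i - real_of_int (round_to_zero (s * x i))) / s"
      using that assms by (simp add: lattice_round_def field_simps)
    then show ?thesis
      using assms abs_sub_round_to_zero_le[of "s * x i"] by (simp add: divide_right_mono)
  qed
  then have "L2_set (\<lambda>i. \<bar>x i - real_of_int (lattice_round s S x i) / s\<bar>) S \<le> L2_set (\<lambda>_. 1 / s) S"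
    by (intro L2_set_mono) auto
  then show ?thesis
    using assms by (simp add: L2_set_abs L2_set_constant)
qed

lemma sum_abs_lattice_round_le:
  assumes "0 < s"
  shows "(\<Sum>i\<in>S. \<bar>real_of_int (lattice_round s S x i)\<bar>) \<le> s * sqrt (card S) * L2_set x S"
proof -
  have "(\<Sum>i\<in>S. \<bar>real_of_int (lattice_round s S x i)\<bar>) \<le> (\<Sum>i\<in>S. s * (\<bar>1\<bar> * \<bar>x i\<bar>))"
  proof (intro sum_mono)
    fix i assume "i \<in> S"
    then show "\<bar>real_of_int (lattice_round s S x i)\<bar> \<le> s * (\<bar>1\<bar> * \<bar>x i\<bar>)"
      using assms abs_round_to_zero_le[of "s * x i"] by (simp add: lattice_round_def abs_mult)
  qed
  also have "\<dots> \<le> s * (L2_set (\<lambda>_. 1) S * L2_set x S)"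
    using assms L2_set_mult_ineq[of "\<lambda>_. 1" x S] by (simp add: mult_left_mono flip: sum_distrib_left)
  finally show ?thesis
    by (simp add: L2_set_constant)
qed

definition int_l1_ball :: "nat \<Rightarrow> real \<Rightarrow> (nat \<Rightarrow> int) set" where
  "int_l1_ball n R = {z. (\<forall>i\<ge>n. z i = 0) \<and> real_of_int (\<Sum>i<n. \<bar>z i\<bar>) \<le> R}"

lemma inj_on_restrict_int_l1_ball: "inj_on (\<lambda>z. restrict z {..<n}) (int_l1_ball n R)"
proof (rule inj_onI)
  fix z z' assume z: "z \<in> int_l1_ball n R" and z': "z' \<in> int_l1_ball n R"
    and eq: "restrict z {..<n} = restrict z' {..<n}"
  show "z = z'"
  proof
    fix i show "z i = z' i"
    proof (cases "i < n")
      case True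
      then show ?thesis
        using fun_cong[OF eq, of i] by simp
    next
      case False
      then show ?thesis
        using z z' by (simp add: int_l1_ball_def)
    qed
  qed
qed

lemma restrict_int_l1_ball_subset:
  "(\<lambda>z. restrict z {..<n}) ` int_l1_ball n R
     \<subseteq> PiE {..<n} (\<lambda>_. {-int (nat \<lfloor>R\<rfloor>)..int (nat \<lfloor>R\<rfloor>)})"
proof clarify
  fix z assume z: "z \<in> int_l1_ball n R"
  have bound: "\<bar>z i\<bar> \<le> \<lfloor>R\<rfloor>" if "i < n" for i
  proof -
    have "\<bar>z i\<bar> \<le> (\<Sum>i<n. \<bar>z i\<bar>)"
      using that by (intro member_le_sum) auto
    moreover have "real_of_int (\<Sum>i<n. \<bar>z i\<bar>) \<le> R"
      using z unfolding int_l1_ball_def by blast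
    ultimately show ?thesis
      by (meson le_floor_iff of_int_le_iff order_trans)
  qed
  then show "restrict z {..<n} \<in> PiE {..<n} (\<lambda>_. {-int (nat \<lfloor>R\<rfloor>)..int (nat \<lfloor>R\<rfloor>)})"
    unfolding restrict_PiE_iff
  proof (intro ballI)
    fix i assume "i \<in> {..<n}"
    with bound have zi: "\<bar>z i\<bar> \<le> \<lfloor>R\<rfloor>"
      by simp
    then have "int (nat \<lfloor>R\<rfloor>) = \<lfloor>R\<rfloor>"
      by (meson abs_ge_zero int_nat_eq order_trans)
    with zi show "z i \<in> {-int (nat \<lfloor>R\<rfloor>)..int (nat \<lfloor>R\<rfloor>)}"
      by (simp add: abs_le_iff)
  qed
qed

lemma finite_int_l1_ball: "finite (int_l1_ball n R)"
proof -
  have "finite ((\<lambda>z. restrict z {..<n}) ` int_l1_ball n R)"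
    by (rule finite_subset[OF restrict_int_l1_ball_subset]) (simp add: finite_PiE)
  then show ?thesis
    using inj_on_restrict_int_l1_ball by (rule finite_imageD)
qed

lemma sum_geometric_abs_int_le:
  fixes q :: real
  assumes "0 \<le> q" and "q < 1"
  shows "(\<Sum>m\<in>{-int N..int N}. q ^ nat \<bar>m\<bar>) \<le> (1 + q) / (1 - q)"
proof -
  have "(\<Sum>m\<in>{-int N..int N}. q ^ nat \<bar>m\<bar>) = 2 * (\<Sum>k<Suc N. q ^ k) - 1"
  proof (induction N)
    case (Suc N)
    have interval: "{-int (Suc N)..int (Suc N)} = insert (int (Suc N)) (insert (- int (Suc N)) {-int N..int N})"
      by auto
    have "nat (int N + 1) = Suc N" "nat (1 + int N) = Suc N"
      by auto
    then have "(\<Sum>m\<in>{-int (Suc N)..int (Suc N)}. q ^ nat \<bar>m\<bar>)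
        = q ^ Suc N + q ^ Suc N + (\<Sum>m\<in>{-int N..int N}. q ^ nat \<bar>m\<bar>)"
      unfolding interval by (subst sum.insert; simp)+
    with Suc.IH show ?case
      by simp
  qed simp
  also have "(\<Sum>k<Suc N. q ^ k) = (1 - q ^ Suc N) / (1 - q)"
    using assms by (simp add: sum_gp_strict del: sum.lessThan_Suc)
  also have "\<dots> \<le> 1 / (1 - q)"
    using assms by (intro divide_right_mono) auto
  finally show ?thesis
    using assms by (simp add: field_simps)
qed

lemma sum_PiE_prod_pow_abs_le:
  fixes q :: real
  assumes "0 \<le> q" and "q < 1"
  shows "(\<Sum>h\<in>PiE {..<n} (\<lambda>_. {-int N..int N}). \<Prod>i<n. q ^ nat \<bar>h i\<bar>) \<le> ((1 + q) / (1 - q)) ^ n"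
proof -
  have "(\<Sum>h\<in>PiE {..<n} (\<lambda>_. {-int N..int N}). \<Prod>i<n. q ^ nat \<bar>h i\<bar>)
      = (\<Prod>i<n. \<Sum>m\<in>{-int N..int N}. q ^ nat \<bar>m\<bar>)"
    by (rule prod_sum_PiE[symmetric]) auto
  also have "\<dots> \<le> ((1 + q) / (1 - q)) ^ n"
    using assms by (simp add: power_mono sum_geometric_abs_int_le sum_nonneg)
  finally show ?thesis .
qed

lemma card_int_l1_ball_le:
  assumes "0 < l"
  shows "real (card (int_l1_ball n R)) \<le> exp (l * R) * ((1 + exp (-l)) / (1 - exp (-l))) ^ n"
proof -
  define N where "N = nat \<lfloor>R\<rfloor>"
  define A where "A = (\<lambda>z. restrict z {..<n}) ` int_l1_ball n R"
  define w where "w h = exp (l * R) * (\<Prod>i<n. exp (-l) ^ nat \<bar>h i\<bar>)" for h :: "nat \<Rightarrow> int"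
  have w: "w h = exp (l * (R - (\<Sum>i<n. real_of_int \<bar>h i\<bar>)))" for h
  proof -
    have "exp (-l) ^ nat \<bar>m\<bar> = exp (- l * real_of_int \<bar>m\<bar>)" for m :: int
      by (simp add: exp_of_nat_mult[symmetric] mult.commute)
    then have "w h = exp (l * R) * exp (\<Sum>i<n. - l * real_of_int \<bar>h i\<bar>)"
      by (simp only: w_def exp_sum finite_lessThan)
    then show ?thesis
      by (simp add: mult_exp_exp right_diff_distrib sum_distrib_left sum_negf)
  qed
  have "real (card (int_l1_ball n R)) = (\<Sum>h\<in>A. 1)"
    by (simp add: A_def card_image[OF inj_on_restrict_int_l1_ball])
  also have "\<dots> \<le> (\<Sum>h\<in>A. w h)"
  proof (rule sum_mono)
    fix h assume "h \<in> A"
    then obtain z where z: "z \<in> int_l1_ball n R" and h: "h = restrict z {..<n}"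
      by (auto simp: A_def)
    have "(\<Sum>i<n. real_of_int \<bar>h i\<bar>) = real_of_int (\<Sum>i<n. \<bar>z i\<bar>)"
      by (simp add: h)
    also have "\<dots> \<le> R"
      using z by (simp add: int_l1_ball_def)
    finally show "1 \<le> w h"
      using assms by (simp add: w)
  qed
  also have "\<dots> \<le> (\<Sum>h\<in>PiE {..<n} (\<lambda>_. {-int N..int N}). w h)"
    using restrict_int_l1_ball_subset unfolding A_def N_def
    by (intro sum_mono2) (auto simp: w finite_PiE)
  also have "\<dots> \<le> exp (l * R) * ((1 + exp (-l)) / (1 - exp (-l))) ^ n"
    using assms by (simp add: w_def sum_PiE_prod_pow_abs_le mult_left_mono flip: sum_distrib_left)
  finally show ?thesis .
qed

text \<open>
  At scale 4 sqrt K the rounding error of a unit vector supported on at most K coordinates is at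
  most 1/4, and by Cauchy-Schwarz the rounded integer vector has l1-norm at most 4K.
\<close>

definition lattice_net :: "nat \<Rightarrow> real \<Rightarrow> (nat \<Rightarrow> real) set" where
  "lattice_net n K = {u. L2_set u {..<n} \<le> 1 \<and>
     (\<exists>z\<in>int_l1_ball n (4 * K). u = (\<lambda>i. real_of_int (z i) / (4 * sqrt K)))}"

lemma lattice_net_subset_image:
  "lattice_net n K \<subseteq> (\<lambda>z i. real_of_int (z i) / (4 * sqrt K)) ` int_l1_ball n (4 * K)"
  by (auto simp: lattice_net_def)

lemma finite_lattice_net: "finite (lattice_net n K)"
  using finite_subset[OF lattice_net_subset_image] finite_int_l1_ball by blast

lemma card_lattice_net_le:
  assumes "0 < \<alpha>" and "\<alpha> \<le> 1/2"
  shows "real (card (lattice_net n K)) \<le> exp (4 * K * ln (1 / \<alpha>) + 4 * \<alpha> * n)"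
proof -
  define l where "l = ln (1 / \<alpha>)"
  have l: "0 < l" and exp_l: "exp (-l) = \<alpha>"
    using assms by (simp_all add: l_def ln_div)
  have "card (lattice_net n K) \<le> card (int_l1_ball n (4 * K))"
    using card_mono[OF _ lattice_net_subset_image] card_image_le finite_int_l1_ball
    by (meson finite_imageI le_trans)
  then have "real (card (lattice_net n K)) \<le> exp (l * (4 * K)) * ((1 + \<alpha>) / (1 - \<alpha>)) ^ n"
    using card_int_l1_ball_le[OF l, of n "4 * K"] exp_l by simp
  also have "\<dots> \<le> exp (l * (4 * K)) * exp (4 * \<alpha>) ^ n"
  proof (intro mult_left_mono power_mono)
    have "(1 + \<alpha>) / (1 - \<alpha>) \<le> 1 + 4 * \<alpha>"
      using assms by (simp add: field_simps)
    also have "\<dots> \<le> exp (4 * \<alpha>)"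
      by (rule exp_ge_add_one_self)
    finally show "(1 + \<alpha>) / (1 - \<alpha>) \<le> exp (4 * \<alpha>)" .
  qed (use assms in auto)
  also have "\<dots> = exp (4 * K * ln (1 / \<alpha>) + 4 * \<alpha> * n)"
    by (simp add: l_def mult_exp_exp exp_of_nat_mult[symmetric] algebra_simps)
  finally show ?thesis .
qed

lemma lattice_round_mem_int_l1_ball:
  assumes S: "S \<subseteq> {..<n}" and card_S: "real (card S) \<le> K" and K: "0 < K"
    and x: "L2_set x S \<le> 1"
  shows "lattice_round (4 * sqrt K) S x \<in> int_l1_ball n (4 * K)"
proof -
  define s where "s = 4 * sqrt K"
  define z where "z = lattice_round s S x"
  have s: "0 < s"
    using K by (simp add: s_def)
  have support: "z i = 0" if "i \<notin> S" for i
    using that by (simp add: z_def lattice_round_def)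
  have "real_of_int (\<Sum>i<n. \<bar>z i\<bar>) = (\<Sum>i\<in>S. \<bar>real_of_int (z i)\<bar>)"
    using S support by (simp add: sum.mono_neutral_right)
  also have "\<dots> \<le> s * sqrt (card S) * L2_set x S"
    unfolding z_def by (rule sum_abs_lattice_round_le[OF s])
  also have "\<dots> \<le> s * sqrt K * 1"
    using s card_S x by (intro mult_mono) auto
  also have "\<dots> = 4 * K"
    using K by (simp add: s_def)
  finally have "real_of_int (\<Sum>i<n. \<bar>z i\<bar>) \<le> 4 * K" .
  moreover have "\<forall>i\<ge>n. z i = 0"
    using S support by (meson lessThan_iff not_le subsetD)
  ultimately show ?thesis
    by (simp add: int_l1_ball_def z_def s_def)
qed

lemma exists_lattice_net_approx:
  assumes S: "S \<subseteq> {..<n}" and card_S: "real (card S) \<le> K" and K: "0 < K"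
    and x: "L2_set x S \<le> 1"
  shows "\<exists>u\<in>lattice_net n K. (\<forall>i. i \<notin> S \<longrightarrow> u i = 0) \<and>
           L2_set u S \<le> 1 \<and> L2_set (\<lambda>i. x i - u i) S \<le> 1/4"
proof -
  define s where "s = 4 * sqrt K"
  define z where "z = lattice_round s S x"
  define u where "u = (\<lambda>i. real_of_int (z i) / s)"
  have s: "0 < s"
    using K by (simp add: s_def)
  have support: "u i = 0" if "i \<notin> S" for i
    using that by (simp add: u_def z_def lattice_round_def)
  have u_S: "L2_set u S \<le> 1"
    using L2_set_lattice_round_le[OF s, of S x] x by (simp add: u_def z_def)
  moreover have "L2_set u {..<n} = L2_set u S"
    unfolding L2_set_def using S support by (simp add: sum.mono_neutral_right)
  moreover have "z \<in> int_l1_ball n (4 * K)"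
    unfolding z_def s_def by (rule lattice_round_mem_int_l1_ball[OF assms])
  ultimately have "u \<in> lattice_net n K"
    by (auto simp: lattice_net_def u_def s_def)
  moreover have "L2_set (\<lambda>i. x i - u i) S \<le> 1/4"
  proof -
    have "L2_set (\<lambda>i. x i - u i) S \<le> sqrt (card S) / s"
      unfolding u_def z_def by (rule L2_set_sub_lattice_round_le[OF s])
    also have "\<dots> \<le> sqrt K / s"
      using s card_S by (simp add: divide_right_mono)
    also have "\<dots> = 1/4"
      using K by (simp add: s_def)
    finally show ?thesis .
  qed
  ultimately show ?thesis
    using u_S support by blast
qed

lemma op_norm_sub_le_of_lattice_net:
  assumes S: "S \<subseteq> {..<n}" and "real (card S) \<le> K" and "0 < K"
    and bounded: "\<And>u v. u \<in> lattice_net n K \<Longrightarrow> v \<in> lattice_net n K \<Longrightarrow>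
                   (\<Sum>i<n. \<Sum>j<n. u i * W i j * v j) \<le> t"
  shows "op_norm_sub W S \<le> 2 * t"
proof -
  define N where "N = {u \<in> lattice_net n K. \<forall>i. i \<notin> S \<longrightarrow> u i = 0}"
  have on_S: "(\<Sum>i<n. g i) = (\<Sum>i\<in>S. g i)" if "\<And>i. i \<notin> S \<Longrightarrow> g i = 0" for g :: "nat \<Rightarrow> real"
    using S that by (intro sum.mono_neutral_right) auto
  have "(1 - 2 * (1/4)) * op_norm_sub W S \<le> t"
  proof (rule op_norm_sub_le_of_net[where N = N])
    fix x assume "L2_set x S \<le> 1"
    then show "\<exists>u\<in>N. L2_set u S \<le> 1 \<and> L2_set (\<lambda>i. x i - u i) S \<le> 1/4"
      using exists_lattice_net_approx[OF assms(1-3)] by (fastforce simp: N_def)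
  next
    fix u v assume u: "u \<in> N" and v: "v \<in> N"
    have "(\<Sum>i\<in>S. u i * mat_vec W S v i) = (\<Sum>i<n. \<Sum>j<n. u i * W i j * v j)"
      using u v by (simp add: N_def mat_vec_def on_S sum_distrib_left mult.assoc)
    also have "\<dots> \<le> t"
      using u v by (intro bounded) (simp_all add: N_def)
    finally show "(\<Sum>i\<in>S. u i * mat_vec W S v i) \<le> t" .
  qed
  then show ?thesis
    by simp
qed

section \<open>The probability estimate\<close>

lemma card_sym_form_tail_union_le:
  assumes "finite N" and N: "\<And>u. u \<in> N \<Longrightarrow> L2_set u {..<n} \<le> 1" and "0 \<le> t"
  shows "card {f \<in> sign_configs n. \<exists>u\<in>N. \<exists>v\<in>N. t \<le> (\<Sum>i<n. \<Sum>j<n. u i * sym_of f i j * v j)}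
           \<le> (card N)\<^sup>2 * card (sign_configs n) * exp (- t\<^sup>2 / 4)"
proof -
  define T where "T p = {f \<in> sign_configs n. t \<le> (\<Sum>i<n. \<Sum>j<n. fst p i * sym_of f i j * snd p j)}" for p
  have "{f \<in> sign_configs n. \<exists>u\<in>N. \<exists>v\<in>N. t \<le> (\<Sum>i<n. \<Sum>j<n. u i * sym_of f i j * v j)}
      = (\<Union>p\<in>N \<times> N. T p)"
    unfolding T_def by fastforce
  then have "real (card {f \<in> sign_configs n. \<exists>u\<in>N. \<exists>v\<in>N. t \<le> (\<Sum>i<n. \<Sum>j<n. u i * sym_of f i j * v j)})
      \<le> (\<Sum>p\<in>N \<times> N. real (card (T p)))"
    unfolding of_nat_sum[symmetric] of_nat_le_iff by (simp add: card_UN_le assms(1))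
  also have "\<dots> \<le> (\<Sum>p\<in>N \<times> N. card (sign_configs n) * exp (- t\<^sup>2 / 4))"
    unfolding T_def using assms by (intro sum_mono card_sym_form_tail_le) auto
  also have "\<dots> = (card N)\<^sup>2 * card (sign_configs n) * exp (- t\<^sup>2 / 4)"
    by (simp add: card_cartesian_product power2_eq_square)
  finally show ?thesis .
qed

lemma prob_rademacher_sym_pmf_ge:
  assumes "B \<subseteq> sign_configs n" and "\<And>f. f \<in> sign_configs n \<Longrightarrow> f \<notin> B \<Longrightarrow> sym_of f \<in> G"
  shows "1 - card B / card (sign_configs n) \<le> measure_pmf.prob (rademacher_sym_pmf n) G"
proof -
  let ?C = "sign_configs n"
  have C: "finite ?C" "0 < card ?C"
    using finite_sign_configs sign_configs_nonempty by (auto simp: card_gt_0_iff)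
  have "card ?C - card B \<le> card (?C \<inter> sym_of -` G)"
    using assms C(1) by (intro order_trans[OF diff_card_le_card_Diff card_mono]) (auto intro: finite_subset)
  then have "real (card ?C) - card B \<le> card (?C \<inter> sym_of -` G)"
    using assms C(1) card_mono by (simp add: of_nat_diff flip: of_nat_le_iff)
  then have "(real (card ?C) - card B) / card ?C \<le> card (?C \<inter> sym_of -` G) / card ?C"
    by (rule divide_right_mono) simp
  then have "1 - card B / card ?C \<le> card (?C \<inter> sym_of -` G) / card ?C"
    using C(2) by (simp add: diff_divide_distrib)
  also have "\<dots> = measure_pmf.prob (rademacher_sym_pmf n) G"
    using C by (simp add: rademacher_sym_pmf_def measure_pmf_of_set sign_configs_nonempty)
  finally show ?thesis .
qed

lemma card_lattice_net_sq_mul_exp_le: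
  fixes \<alpha> \<beta> :: real and n :: nat
  assumes "0 < \<alpha>" and "\<alpha> \<le> 1/4"
    and \<alpha>\<beta>: "9 * \<alpha> * ln (1 / \<alpha>) + 8 * \<alpha> \<le> \<beta>\<^sup>2 / 16"
  shows "(card (lattice_net n (\<alpha> * n)))\<^sup>2 * exp (- (\<beta> * sqrt n / 2)\<^sup>2 / 4)
           \<le> exp (- (\<alpha> * ln (1 / \<alpha>) * n))"
proof -
  define L where "L = ln (1 / \<alpha>)"
  have "(card (lattice_net n (\<alpha> * n)))\<^sup>2 * exp (- (\<beta> * sqrt n / 2)\<^sup>2 / 4)
      \<le> (exp (4 * (\<alpha> * n) * L + 4 * \<alpha> * n))\<^sup>2 * exp (- (\<beta> * sqrt n / 2)\<^sup>2 / 4)"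
    using card_lattice_net_le[of \<alpha> n "\<alpha> * n"] assms
    by (intro mult_right_mono power_mono) (auto simp: L_def)
  also have "\<dots> = exp (n * (8 * \<alpha> * L + 8 * \<alpha> - \<beta>\<^sup>2 / 16))"
  proof -
    have "(\<beta> * sqrt n / 2)\<^sup>2 = \<beta>\<^sup>2 * n / 4"
      by (simp add: power_divide power_mult_distrib)
    then show ?thesis
      by (simp add: power2_eq_square mult_exp_exp algebra_simps)
  qed
  also have "\<dots> \<le> exp (- (\<alpha> * L * n))"
  proof -
    have "n * (8 * \<alpha> * L + 8 * \<alpha> - \<beta>\<^sup>2 / 16) \<le> n * (- (\<alpha> * L))"
      using \<alpha>\<beta> by (intro mult_left_mono) (auto simp: L_def)
    then show ?thesis
      by (simp add: mult_ac)
  qed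
  finally show ?thesis
    by (simp add: L_def)
qed

lemma prob_op_norm_sub_small_ge:
  fixes \<alpha> \<beta> :: real and n :: nat
  assumes "0 < \<beta>" and "0 < \<alpha>" and "\<alpha> \<le> 1/4" and "0 < n"
    and "9 * \<alpha> * ln (1 / \<alpha>) + 8 * \<alpha> \<le> \<beta>\<^sup>2 / 16"
  shows "1 - exp (- (\<alpha> * ln (1 / \<alpha>) * n)) \<le> measure_pmf.prob (rademacher_sym_pmf n)
           {W. \<forall>S \<subseteq> {..<n}. real (card S) \<le> \<alpha> * n \<longrightarrow> op_norm_sub W S \<le> \<beta> * sqrt n}"
proof -
  define K where "K = \<alpha> * n"
  define t where "t = \<beta> * sqrt n / 2"
  define N where "N = lattice_net n K"
  define B where "B = {f \<in> sign_configs n. \<exists>u\<in>N. \<exists>v\<in>N. t \<le> (\<Sum>i<n. \<Sum>j<n. u i * sym_of f i j * v j)}"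
  have K: "0 < K" and C: "0 < card (sign_configs n)"
    using assms finite_sign_configs sign_configs_nonempty by (simp_all add: K_def card_gt_0_iff)
  have "1 - card B / card (sign_configs n) \<le> measure_pmf.prob (rademacher_sym_pmf n)
          {W. \<forall>S \<subseteq> {..<n}. real (card S) \<le> \<alpha> * n \<longrightarrow> op_norm_sub W S \<le> 2 * t}"
  proof (rule prob_rademacher_sym_pmf_ge)
    fix f assume "f \<in> sign_configs n" and "f \<notin> B"
    then have "(\<Sum>i<n. \<Sum>j<n. u i * sym_of f i j * v j) \<le> t"
      if "u \<in> lattice_net n K" and "v \<in> lattice_net n K" for u v
      using that by (force simp: B_def N_def)
    then show "sym_of f \<in> {W. \<forall>S \<subseteq> {..<n}. real (card S) \<le> \<alpha> * n \<longrightarrow> op_norm_sub W S \<le> 2 * t}"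
      using op_norm_sub_le_of_lattice_net[OF _ _ K] by (auto simp: K_def)
  qed (auto simp: B_def)
  moreover have "card B \<le> (card N)\<^sup>2 * card (sign_configs n) * exp (- t\<^sup>2 / 4)"
    unfolding B_def N_def using assms
    by (intro card_sym_form_tail_union_le finite_lattice_net) (auto simp: lattice_net_def t_def)
  then have "card B / card (sign_configs n) \<le> (card N)\<^sup>2 * exp (- t\<^sup>2 / 4)"
    using C by (simp add: divide_le_eq mult_ac)
  moreover have "(card N)\<^sup>2 * exp (- t\<^sup>2 / 4) \<le> exp (- (\<alpha> * ln (1 / \<alpha>) * n))"
    unfolding N_def K_def t_def using assms(2,3,5) by (rule card_lattice_net_sq_mul_exp_le)
  ultimately show ?thesis
    by (simp add: t_def)
qed

lemma exists_small_alpha: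
  fixes \<beta> :: real
  assumes "0 < \<beta>"
  shows "\<exists>\<alpha>>0. \<alpha> \<le> 1/4 \<and> 9 * \<alpha> * ln (1 / \<alpha>) + 8 * \<alpha> \<le> \<beta>\<^sup>2 / 16"
proof -
  \<comment> \<open>\<alpha> = r^2 satisfies \<alpha> ln(1/\<alpha>) \<le> 2 r\<close>
  define r where "r = min (1/2) (\<beta>\<^sup>2 / 416)"
  have r: "0 < r" "r \<le> 1/2" "r \<le> \<beta>\<^sup>2 / 416"
    using assms by (simp_all add: r_def)
  have "ln (1 / r\<^sup>2) = 2 * ln (1 / r)"
    using r by (simp add: ln_div ln_realpow)
  also have "\<dots> \<le> 2 / r"
    using r ln_le_minus_one[of "1 / r"] by simp
  finally have "r\<^sup>2 * ln (1 / r\<^sup>2) \<le> 2 * r"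
    using r mult_left_mono[of _ _ "r\<^sup>2"] by (simp add: power2_eq_square field_simps)
  moreover have "r\<^sup>2 \<le> r"
    using r by (simp add: power2_eq_square mult_le_cancel_right1)
  ultimately have "9 * r\<^sup>2 * ln (1 / r\<^sup>2) + 8 * r\<^sup>2 \<le> \<beta>\<^sup>2 / 16"
    using r by linarith
  moreover have "r\<^sup>2 \<le> 1/4"
    using r power_mono[of r "1/2" 2] by (simp add: power_divide)
  ultimately show ?thesis
    using r by (intro exI[of _ "r\<^sup>2"]) simp
qed

theorem lemma2:
  fixes \<beta> :: real
  assumes "\<beta> > 0"
  shows "\<exists>\<alpha>>0. \<alpha> < 1 \<and>
    (\<forall>n::nat. measure_pmf.prob (rademacher_sym_pmf n)
        {W. \<forall>S \<subseteq> {..<n}. real (card S) \<le> \<alpha> * real n \<longrightarrow> op_norm_sub W S \<le> \<beta> * sqrt (real n)}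
      \<ge> 1 - 4 * exp (- (\<alpha> * ln (1 / \<alpha>) * real n)))"
proof -
  obtain \<alpha> where \<alpha>: "0 < \<alpha>" "\<alpha> \<le> 1/4" "9 * \<alpha> * ln (1 / \<alpha>) + 8 * \<alpha> \<le> \<beta>\<^sup>2 / 16"
    using exists_small_alpha[OF assms] by blast
  show ?thesis
  proof (intro exI[of _ \<alpha>] conjI allI)
    fix n :: nat
    let ?G = "{W. \<forall>S \<subseteq> {..<n}. real (card S) \<le> \<alpha> * real n \<longrightarrow> op_norm_sub W S \<le> \<beta> * sqrt (real n)}"
    show "measure_pmf.prob (rademacher_sym_pmf n) ?G \<ge> 1 - 4 * exp (- (\<alpha> * ln (1 / \<alpha>) * real n))"
    proof (cases "n = 0")
      case True
      have "0 \<le> measure_pmf.prob (rademacher_sym_pmf n) ?G"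
        by (rule measure_nonneg)
      moreover have "1 - 4 * exp (- (\<alpha> * ln (1 / \<alpha>) * real n)) < 0"
        using True by simp
      ultimately show ?thesis
        by linarith
    next
      case False
      then have "1 - exp (- (\<alpha> * ln (1 / \<alpha>) * real n)) \<le> measure_pmf.prob (rademacher_sym_pmf n) ?G"
        using assms \<alpha> by (intro prob_op_norm_sub_small_ge) auto
      then show ?thesis
        using exp_ge_zero[of "- (\<alpha> * ln (1 / \<alpha>) * real n)"] by linarith
    qed
  qed (use \<alpha> in auto)
qed

end
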